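(* Let $l\ge-\tfrac12$. The functions $U_0:=Y_{l,x}Y_{l,t}[p_0]$ and $U_{4n-1}:=Y_{l,x}Y_{l,t}[p_{4n-1}]$, $n=1,2,\dots$, satisfy $$\left(\frac{\partial^2}{\partial x^2}-\frac{\partial^2}{\partial t^2}-\frac{l(l+1)}{x^2}+\frac{l(l+1)}{t^2}\right)U(x,t)=0,\qquad x,t>0,$$ together with $U(0,t)=0$ and $U(x,0)=0$. Moreover $U_0(x,t)=C_0^2x^{l+1}t^{l+1}$ and $$U_{4n-1}(x,t)=\sum_{\text{even }k=0}^{2n}\binom{2n}{k}\frac{\Gamma\left(n+\frac{1-k}{2}\right)\Gamma\left(\frac{k+1}{2}\right)\Gamma^2(l+1)}{2^{2l+3}\Gamma^2\left(l+\frac32\right)\Gamma\left(n+l+\frac{3-k}{2}\right)\Gamma\left(l+\frac{k+3}{2}\right)}\,x^{2n-k+l+1}t^{k+l+1}.$$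
   Context: For $l\ge-\tfrac12$, $Y_{l,x}f(x)=\frac{x^{-l}}{2^{l+\frac12}\Gamma(l+\frac32)}\int_0^x (x^2-s^2)^l f(s)\,ds$, and $Y_{l,t}$ is the same operator acting in the variable $t$. $C_0=\frac{\Gamma(\frac12)\Gamma(l+1)}{2^{l+\frac32}\Gamma(l+\frac32)^2}$. The wave polynomials used are $p_0(x,t)=1$ and $p_{4n-1}(x,t)=\sum_{\text{even }k=0}^{2n}\binom{2n}{k}x^{2n-k}t^k$, $n\ge1$. *)

theory Defs
  imports "HOL-Analysis.Analysis"
begin

definition Yop :: "real \<Rightarrow> (real \<Rightarrow> real) \<Rightarrow> real \<Rightarrow> real" where
  "Yop l f x = x powr (-l) / (2 powr (l + 1/2) * Gamma (l + 3/2))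
       * integral {0..x} (\<lambda>s. (x\<^sup>2 - s\<^sup>2) powr l * f s)"

definition YY :: "real \<Rightarrow> (real \<Rightarrow> real \<Rightarrow> real) \<Rightarrow> real \<Rightarrow> real \<Rightarrow> real" where
  "YY l p x t = Yop l (\<lambda>s. Yop l (\<lambda>\<tau>. p s \<tau>) t) x"

definition C0 :: "real \<Rightarrow> real" where
  "C0 l = Gamma (1/2) * Gamma (l + 1) / (2 powr (l + 3/2) * (Gamma (l + 3/2))\<^sup>2)"

text \<open>Wave polynomial p_{4n-1}(x,t) = sum over even k in 0..2n of binom(2n,k) x^(2n-k) t^k.\<close>
definition wave_poly :: "nat \<Rightarrow> real \<Rightarrow> real \<Rightarrow> real" where
  "wave_poly n x t = (\<Sum>k\<in>{k. k \<le> 2*n \<and> even k}. real ((2*n) choose k) * x^(2*n-k) * t^k)"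

definition solves_pde :: "real \<Rightarrow> (real \<Rightarrow> real \<Rightarrow> real) \<Rightarrow> real \<Rightarrow> real \<Rightarrow> bool" where
  "solves_pde l U x t \<longleftrightarrow>
     (\<exists>Uxx Utt.
        (\<forall>y>0. (\<lambda>z. U z t) differentiable (at y)) \<and>
        (\<forall>y>0. (\<lambda>z. U x z) differentiable (at y)) \<and>
        ((\<lambda>y. deriv (\<lambda>z. U z t) y) has_real_derivative Uxx) (at x) \<and>
        ((\<lambda>y. deriv (\<lambda>z. U x z) y) has_real_derivative Utt) (at t) \<and>
        Uxx - Utt - l * (l + 1) / x\<^sup>2 * U x t + l * (l + 1) / t\<^sup>2 * U x t = 0)"

end

theory Submission
  imports Defs
begin

text \<open>Y_l maps the monomial s^m to Y_coeff l m * x^(l+m+1), a Beta integral, so every U is a finite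
  sum of terms c x^a t^b with a, b > 0, which gives the boundary behaviour. The operator of the
  equation sends x^a t^b to (a(a-1) - l(l+1)) x^(a-2) t^b - (b(b-1) - l(l+1)) x^a t^(b-2). For
  U_{4n-1} write the coefficient of the k-th term as (2n)! g(k) g(2n-k) with g(m) = Y_coeff l m / m!;
  the Beta recurrence g(m+2) (m+2) (m+2l+3) = g(m) makes the x-part of the k-th term cancel the
  t-part of the (k+2)-nd, so the sum telescopes to zero.\<close>

lemma has_integral_one_minus_sq_powr_power:
  fixes l :: real and m :: nat
  assumes l: "l > -1"
  shows "((\<lambda>s. (1 - s\<^sup>2) powr l * s^m) has_integral Beta ((real m + 1)/2) (l+1) / 2) {0..1}"
proof -
  define f where "f = (\<lambda>u::real. u powr ((real m + 1)/2 - 1) * (1 - u) powr (l + 1 - 1))"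
  have a: "(real m + 1)/2 > 0" and b: "l + 1 > 0" using l by simp_all
  have beta_integrable: "set_integrable lborel {(\<lambda>x::real. x^2) 0..(\<lambda>x. x^2) 1} f"
    using integrable_Beta[OF a b] unfolding f_def by simp
  note subst = integral_substitution[where g="\<lambda>x. x^2" and g'="\<lambda>x. 2*x" and a=0 and b=1, OF beta_integrable]
  have sq_deriv: "\<And>x. x \<in> {0..1} \<Longrightarrow> ((\<lambda>x::real. x^2) has_real_derivative 2*x) (at x)"
    by (auto intro!: derivative_eq_intros)
  have cont: "continuous_on {0..1} (\<lambda>x::real. 2*x)" by (intro continuous_intros)
  have subst_integrable: "set_integrable lborel {0..1} (\<lambda>x. f (x^2) * (2*x))"
    using subst(1)[OF sq_deriv cont] by auto
  have beta_lint: "(LINT x:{0..1}|lborel. f x) = Beta ((real m + 1)/2) (l+1)"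
    using set_borel_integral_eq_integral(2)[OF integrable_Beta[OF a b]] has_integral_Beta_real[OF a b]
    unfolding f_def by (simp add: integral_unique)
  have "(LINT x:{0..1}|lborel. f x) = (LINT x:{0..1}|lborel. f (x^2) * (2*x))"
    using subst(2)[OF sq_deriv cont] unfolding set_lebesgue_integral_def by (simp add: mult.commute)
  with beta_lint have "integral {0..1} (\<lambda>x. f (x^2) * (2*x)) = Beta ((real m + 1)/2) (l+1)"
    using set_borel_integral_eq_integral(2)[OF subst_integrable] by simp
  hence "((\<lambda>x. f (x^2) * (2*x)) has_integral Beta ((real m + 1)/2) (l+1)) {0..1}"
    using set_borel_integral_eq_integral(1)[OF subst_integrable] by (metis has_integral_integral)
  from has_integral_divide[OF this, of 2]
  have halved: "((\<lambda>x. f (x^2) * (2*x) / 2) has_integral Beta ((real m + 1)/2) (l+1) / 2) {0..1}"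
    by simp
  show ?thesis
  proof (rule has_integral_spike[OF negligible_sing[of 0] _ halved])
    fix s :: real assume "s \<in> {0..1} - {0}"
    hence s: "s > 0" by auto
    have "s^2 = s powr 2" using s by simp
    hence "(s^2) powr ((real m + 1)/2 - 1) = s powr (2 * ((real m + 1)/2 - 1))"
      by (simp add: powr_powr)
    also have "2 * ((real m + 1)/2 - 1) = real m - 1" by (simp add: field_simps)
    also have "s powr (real m - 1) * s = s ^ m"
      using s by (simp add: powr_diff powr_realpow)
    finally have "(s^2) powr ((real m + 1)/2 - 1) * s = s^m" by simp
    thus "(1 - s\<^sup>2) powr l * s^m = f (s^2) * (2 * s) / 2"
      unfolding f_def by (simp add: algebra_simps)
  qed
qed

lemma has_integral_sq_diff_powr_power:
  fixes l x :: real and m :: nat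
  assumes l: "l > -1" and x: "x > 0"
  shows "((\<lambda>s. (x\<^sup>2 - s\<^sup>2) powr l * s^m) has_integral
           x powr (2*l + real m + 1) * (Beta ((real m + 1)/2) (l+1) / 2)) {0..x}"
proof -
  define B where "B = Beta ((real m + 1)/2) (l+1) / 2"
  have "1/x \<noteq> 0" using x by simp
  from has_integral_stretch_real[OF has_integral_one_minus_sq_powr_power[OF l, of m] this]
  have stretched: "((\<lambda>s. (1 - (s/x)\<^sup>2) powr l * (s/x)^m) has_integral x * B) ((\<lambda>y. x * y) ` {0..1})"
    using x by (simp add: B_def mult.commute)
  have img: "(\<lambda>y. x * y) ` {0..1} = {0..x}"
  proof
    show "(\<lambda>y. x * y) ` {0..1} \<subseteq> {0..x}" using x by (auto simp: mult_le_cancel_left1)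
    show "{0..x} \<subseteq> (\<lambda>y. x * y) ` {0..1}"
    proof
      fix s assume "s \<in> {0..x}"
      hence "s / x \<in> {0..1}" "s = x * (s/x)" using x by auto
      thus "s \<in> (\<lambda>y. x * y) ` {0..1}" by blast
    qed
  qed
  have scaled: "((\<lambda>s. x powr (2*l) * x^m * ((1 - (s/x)\<^sup>2) powr l * (s/x)^m)) has_integral
             x powr (2*l) * x^m * (x * B)) {0..x}"
    by (rule has_integral_mult_right[OF stretched[unfolded img]])
  have total: "x powr (2*l) * x^m * (x * B) = x powr (2*l + real m + 1) * B"
    using x by (simp add: powr_add powr_realpow)
  have integrand: "x powr (2*l) * x^m * ((1 - (s/x)\<^sup>2) powr l * (s/x)^m) = (x\<^sup>2 - s\<^sup>2) powr l * s^m"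
    if s: "s \<in> {0..x}" for s
  proof -
    have "x\<^sup>2 - s\<^sup>2 = x\<^sup>2 * (1 - (s/x)\<^sup>2)" using x by (simp add: field_simps)
    moreover have "(s/x)\<^sup>2 \<le> 1" using s x by (simp add: power_le_one)
    moreover have "(x\<^sup>2) powr l = x powr (2*l)"
    proof -
      have "x\<^sup>2 = x powr 2" using x by simp
      thus ?thesis by (simp add: powr_powr mult.commute)
    qed
    moreover have "x^m * (s/x)^m = s^m" using x by (simp add: power_mult_distrib[symmetric])
    ultimately show ?thesis using x by (simp add: powr_mult mult_ac)
  qed
  have "((\<lambda>s. (x\<^sup>2 - s\<^sup>2) powr l * s^m) has_integral x powr (2*l) * x^m * (x * B)) {0..x}"
    by (rule has_integral_cong[THEN iffD1, OF _ scaled]) (simp add: integrand)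
  thus ?thesis unfolding total by (simp add: B_def)
qed

definition Y_coeff :: "real \<Rightarrow> nat \<Rightarrow> real" where
  "Y_coeff l m = Beta ((real m + 1)/2) (l+1) / (2 * (2 powr (l + 1/2) * Gamma (l + 3/2)))"

lemma Yop_power_sum:
  fixes l x :: real and S :: "nat set" and a :: "nat \<Rightarrow> real" and m :: "nat \<Rightarrow> nat"
  assumes l: "l > -1" and x: "x > 0" and S: "finite S"
  shows "Yop l (\<lambda>s. \<Sum>k\<in>S. a k * s^(m k)) x = (\<Sum>k\<in>S. a k * Y_coeff l (m k) * x powr (l + real (m k) + 1))"
proof -
  define B where "B = (\<lambda>k. x powr (2*l + real (m k) + 1) * (Beta ((real (m k) + 1)/2) (l+1) / 2))"
  define D where "D = 2 powr (l + 1/2) * Gamma (l + 3/2)"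
  have "((\<lambda>s. \<Sum>k\<in>S. a k * ((x\<^sup>2 - s\<^sup>2) powr l * s^(m k))) has_integral (\<Sum>k\<in>S. a k * B k)) {0..x}"
    unfolding B_def
    by (intro has_integral_sum[OF S] has_integral_mult_right has_integral_sq_diff_powr_power[OF l x])
  moreover have "(\<lambda>s. (x\<^sup>2 - s\<^sup>2) powr l * (\<Sum>k\<in>S. a k * s^(m k)))
      = (\<lambda>s. \<Sum>k\<in>S. a k * ((x\<^sup>2 - s\<^sup>2) powr l * s^(m k)))"
    by (simp only: sum_distrib_left mult.left_commute)
  ultimately have "integral {0..x} (\<lambda>s. (x\<^sup>2 - s\<^sup>2) powr l * (\<Sum>k\<in>S. a k * s^(m k))) = (\<Sum>k\<in>S. a k * B k)"
    by (simp add: integral_unique)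
  hence "Yop l (\<lambda>s. \<Sum>k\<in>S. a k * s^(m k)) x = (\<Sum>k\<in>S. x powr (-l) / D * (a k * B k))"
    unfolding Yop_def D_def by (simp add: sum_distrib_left)
  also have "\<dots> = (\<Sum>k\<in>S. a k * Y_coeff l (m k) * x powr (l + real (m k) + 1))"
  proof (rule sum.cong[OF refl])
    fix k
    have "x powr (-l) * x powr (2*l + real (m k) + 1) = x powr (l + real (m k) + 1)"
      by (simp add: powr_add[symmetric] add_ac)
    thus "x powr (-l) / D * (a k * B k) = a k * Y_coeff l (m k) * x powr (l + real (m k) + 1)"
      unfolding B_def Y_coeff_def D_def by (simp add: field_simps)
  qed
  finally show ?thesis .
qed

lemma Yop_at_0: "Yop l f 0 = 0"
  unfolding Yop_def by simp

lemma YY_at_0_left: "YY l p 0 t = 0"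
  unfolding YY_def by (rule Yop_at_0)

lemma YY_at_0_right: "YY l p x 0 = 0"
  unfolding YY_def Yop_at_0 by (simp add: Yop_def)

lemma Y_coeff_Gamma:
  "Y_coeff l m = Gamma ((real m + 1)/2) * Gamma (l+1) /
     (Gamma ((real m + 1)/2 + (l + 1)) * (2 powr (l + 3/2) * Gamma (l + 3/2)))"
proof -
  have "l + 3/2 = (l + 1/2) + 1" by simp
  hence "2 powr (l + 3/2) = 2 * 2 powr (l + 1/2)" by (simp only: powr_add powr_one mult.commute)
  thus ?thesis unfolding Y_coeff_def Beta_def by (simp add: field_simps)
qed

lemma C0_eq_Y_coeff: "C0 l = Y_coeff l 0"
  unfolding C0_def Y_coeff_Gamma by (simp add: power2_eq_square field_simps)

lemma Y_coeff_mult_complement: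
  fixes l :: real and n k :: nat
  assumes k: "k \<le> 2*n"
  shows "Y_coeff l k * Y_coeff l (2*n-k) =
    Gamma (real n + (1 - real k)/2) * Gamma ((real k + 1)/2) * (Gamma (l + 1))\<^sup>2
      / (2 powr (2*l + 3) * (Gamma (l + 3/2))\<^sup>2
         * Gamma (real n + l + (3 - real k)/2) * Gamma (l + (real k + 3)/2))"
proof -
  have "(real (2*n-k) + 1)/2 = real n + (1 - real k)/2"
    and "(real (2*n-k) + 1)/2 + (l + 1) = real n + l + (3 - real k)/2"
    and "(real k + 1)/2 + (l + 1) = l + (real k + 3)/2"
    using k by (simp_all add: field_simps)
  moreover have "2 powr (2*l + 3) = 2 powr (l + 3/2) * 2 powr (l + 3/2)"
    by (simp add: powr_add[symmetric])
  ultimately show ?thesis unfolding Y_coeff_Gamma by (simp add: power2_eq_square field_simps)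
qed

lemma Y_coeff_step:
  "Y_coeff l (m + 2) * (real m + 2*l + 3) = Y_coeff l m * (real m + 1)"
proof -
  define p where "p = (real m + 1)/2"
  define q where "q = l + 1"
  have "p \<notin> \<int>\<^sub>\<le>\<^sub>0" unfolding p_def by auto
  hence "(p + q) * Beta (p + 1) q = p * Beta p q" by (rule Beta_plus1_left)
  moreover have "(real (m+2) + 1)/2 = p + 1" unfolding p_def by simp
  ultimately show ?thesis unfolding Y_coeff_def p_def q_def by (simp add: field_simps)
qed

lemma Y_coeff_fact_step:
  "Y_coeff l (m + 2) / fact (m + 2) * ((real m + 2) * (real m + 2*l + 3)) = Y_coeff l m / fact m"
proof -
  have "Y_coeff l (m + 2) / fact (m + 2) * ((real m + 2) * (real m + 2*l + 3))
      = Y_coeff l (m + 2) * (real m + 2*l + 3) * (real m + 2) / fact (m + 2)"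
    by simp
  also have "\<dots> = Y_coeff l m * ((real m + 2) * (real m + 1)) / ((real m + 2) * (real m + 1) * fact m)"
    unfolding Y_coeff_step by (simp add: numeral_2_eq_2 algebra_simps)
  also have "\<dots> = Y_coeff l m / fact m" by simp
  finally show ?thesis .
qed

lemma even_atMost_eq_image_double: "{k::nat. k \<le> 2*n \<and> even k} = (\<lambda>j. 2*j) ` {..n}"
  by (auto elim!: evenE)

lemma YY_wave_poly:
  fixes l x t :: real and n :: nat
  assumes l: "l > -1" and x: "x > 0" and t: "t > 0"
  shows "YY l (wave_poly n) x t = (\<Sum>k\<in>{k. k \<le> 2*n \<and> even k}.
      real ((2*n) choose k) * (Y_coeff l k * Y_coeff l (2*n-k))
        * x powr (real (2*n) - real k + l + 1) * t powr (real k + l + 1))"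
proof -
  let ?S = "{k::nat. k \<le> 2*n \<and> even k}"
  have S: "finite ?S" unfolding even_atMost_eq_image_double by simp
  have "Yop l (wave_poly n s) t =
      (\<Sum>k\<in>?S. (real ((2*n) choose k) * Y_coeff l k * t powr (l + real k + 1)) * s^(2*n-k))" for s
    unfolding wave_poly_def
    using Yop_power_sum[OF l t S, of "\<lambda>k. real ((2*n) choose k) * s^(2*n-k)" "\<lambda>k. k"]
    by (simp add: mult_ac)
  hence "YY l (wave_poly n) x t
      = (\<Sum>k\<in>?S. real ((2*n) choose k) * Y_coeff l k * t powr (l + real k + 1)
                  * Y_coeff l (2*n-k) * x powr (l + real (2*n-k) + 1))"
    unfolding YY_def by (simp add: Yop_power_sum[OF l x S])
  also have "\<dots> = (\<Sum>k\<in>?S. real ((2*n) choose k) * (Y_coeff l k * Y_coeff l (2*n-k))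
        * x powr (real (2*n) - real k + l + 1) * t powr (real k + l + 1))"
    by (intro sum.cong) (auto simp: add_ac mult_ac)
  finally show ?thesis .
qed

lemma solves_pde_powr_sum:
  fixes U :: "real \<Rightarrow> real \<Rightarrow> real" and S :: "'a set" and c a b :: "'a \<Rightarrow> real"
  assumes x: "x > 0" and t: "t > 0" and S: "finite S"
    and U: "\<And>y s. y > 0 \<Longrightarrow> s > 0 \<Longrightarrow> U y s = (\<Sum>k\<in>S. c k * y powr a k * s powr b k)"
    and annihilated: "(\<Sum>k\<in>S. c k * ((a k * (a k - 1) - l * (l + 1)) * x powr (a k - 2) * t powr b k
                              - (b k * (b k - 1) - l * (l + 1)) * x powr a k * t powr (b k - 2))) = 0"
  shows "solves_pde l U x t"
proof -
  define Ux where "Ux = (\<lambda>y. \<Sum>k\<in>S. c k * (a k * y powr (a k - 1)) * t powr b k)"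
  define Ut where "Ut = (\<lambda>s. \<Sum>k\<in>S. c k * x powr a k * (b k * s powr (b k - 1)))"
  define Uxx where "Uxx = (\<Sum>k\<in>S. c k * (a k * (a k - 1)) * x powr (a k - 2) * t powr b k)"
  define Utt where "Utt = (\<Sum>k\<in>S. c k * (b k * (b k - 1)) * x powr a k * t powr (b k - 2))"
  have "((\<lambda>z. \<Sum>k\<in>S. c k * z powr a k * t powr b k) has_real_derivative Ux y) (at y)" if "y > 0" for y
    unfolding Ux_def using that by (auto intro!: derivative_eq_intros sum.cong simp: algebra_simps)
  hence dx: "((\<lambda>z. U z t) has_real_derivative Ux y) (at y)" if "y > 0" for y
    by (rule has_field_derivative_transform_within_open[of _ _ _ "{0<..}"]) (use that t U in auto)
  have "((\<lambda>z. \<Sum>k\<in>S. c k * x powr a k * z powr b k) has_real_derivative Ut y) (at y)" if "y > 0" for y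
    unfolding Ut_def using that by (auto intro!: derivative_eq_intros sum.cong simp: algebra_simps)
  hence dt: "((\<lambda>z. U x z) has_real_derivative Ut y) (at y)" if "y > 0" for y
    by (rule has_field_derivative_transform_within_open[of _ _ _ "{0<..}"]) (use that x U in auto)
  have "(Ux has_real_derivative Uxx) (at x)"
    unfolding Ux_def Uxx_def using x by (auto intro!: derivative_eq_intros sum.cong simp: algebra_simps)
  hence dxx: "((\<lambda>y. deriv (\<lambda>z. U z t) y) has_real_derivative Uxx) (at x)"
    by (rule has_field_derivative_transform_within_open[of _ _ _ "{0<..}"])
       (use x in \<open>auto simp: DERIV_imp_deriv[OF dx]\<close>)
  have "(Ut has_real_derivative Utt) (at t)"
    unfolding Ut_def Utt_def using t by (auto intro!: derivative_eq_intros sum.cong simp: algebra_simps)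
  hence dtt: "((\<lambda>y. deriv (\<lambda>z. U x z) y) has_real_derivative Utt) (at t)"
    by (rule has_field_derivative_transform_within_open[of _ _ _ "{0<..}"])
       (use t in \<open>auto simp: DERIV_imp_deriv[OF dt]\<close>)
  have px: "x powr (p - 2) = x powr p / x\<^sup>2" and pt: "t powr (p - 2) = t powr p / t\<^sup>2" for p
    using x t by (simp_all add: powr_diff)
  have "Uxx - Utt - l * (l + 1) / x\<^sup>2 * U x t + l * (l + 1) / t\<^sup>2 * U x t
      = (\<Sum>k\<in>S. c k * (a k * (a k - 1)) * x powr (a k - 2) * t powr b k
                - c k * (b k * (b k - 1)) * x powr a k * t powr (b k - 2)
                - l * (l + 1) / x\<^sup>2 * (c k * x powr a k * t powr b k)
                + l * (l + 1) / t\<^sup>2 * (c k * x powr a k * t powr b k))"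
    unfolding Uxx_def Utt_def U[OF x t] by (simp add: sum_subtractf sum.distrib sum_distrib_left)
  also have "\<dots> = (\<Sum>k\<in>S. c k * ((a k * (a k - 1) - l * (l + 1)) * x powr (a k - 2) * t powr b k
                    - (b k * (b k - 1) - l * (l + 1)) * x powr a k * t powr (b k - 2)))"
    unfolding px pt using x t by (intro sum.cong) (simp_all add: field_simps)
  finally have "Uxx - Utt - l * (l + 1) / x\<^sup>2 * U x t + l * (l + 1) / t\<^sup>2 * U x t = 0"
    unfolding annihilated .
  thus ?thesis unfolding solves_pde_def
    using dx dt dxx dtt by (auto simp: real_differentiable_def)
qed

lemma tendsto_powr_sum_at_right_0:
  fixes f :: "real \<Rightarrow> real" and S :: "'a set"
  assumes S: "finite S" and p: "\<And>k. k \<in> S \<Longrightarrow> p k > 0"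
    and f: "\<And>z. z > 0 \<Longrightarrow> f z = (\<Sum>k\<in>S. c k * z powr p k)"
  shows "(f \<longlongrightarrow> 0) (at_right 0)"
proof -
  have "((\<lambda>z. \<Sum>k\<in>S. c k * z powr p k) \<longlongrightarrow> (\<Sum>k\<in>S. c k * 0 powr p k)) (at_right 0)"
  proof (intro tendsto_sum tendsto_mult tendsto_const)
    fix k assume "k \<in> S"
    thus "((\<lambda>z. z powr p k) \<longlongrightarrow> 0 powr p k) (at_right 0)"
      by (intro tendsto_powr') (use p in \<open>auto simp: eventually_at_filter\<close>)
  qed
  moreover have "eventually (\<lambda>z. (\<Sum>k\<in>S. c k * z powr p k) = f z) (at_right 0)"
    using f by (auto simp: eventually_at_filter)
  ultimately show ?thesis by (simp add: Lim_transform_eventually)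
qed

lemma sum_atMost_telescope_diff:
  fixes A B :: "nat \<Rightarrow> 'a::ab_group_add"
  assumes "\<And>j. j < n \<Longrightarrow> A j = B (Suc j)" and "A n = 0" and "B 0 = 0"
  shows "(\<Sum>j\<le>n. A j - B j) = 0"
proof -
  have "(\<Sum>j\<le>n. A j - B j) = (\<Sum>j<n. B (Suc j) - B j) + (A n - B n)"
    using assms(1) by (simp add: lessThan_Suc_atMost[symmetric])
  thus ?thesis using assms(2,3) by (simp add: sum_lessThan_telescope)
qed

lemma wave_poly_terms_annihilated:
  fixes l x t :: real and n :: nat
  defines "a \<equiv> \<lambda>k::nat. real (2*n) - real k + l + 1" and "b \<equiv> \<lambda>k::nat. real k + l + 1"
  shows "(\<Sum>k\<in>{k. k \<le> 2*n \<and> even k}. real ((2*n) choose k) * (Y_coeff l k * Y_coeff l (2*n-k))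
      * ((a k * (a k - 1) - l * (l + 1)) * x powr (a k - 2) * t powr b k
         - (b k * (b k - 1) - l * (l + 1)) * x powr a k * t powr (b k - 2))) = 0"
proof -
  define g where "g m = Y_coeff l m / fact m" for m
  define F where "F = (fact (2*n) :: real)"
  define A where "A j = F * g (2*j) * g (2*n - 2*j)
      * ((2*real n - 2*real j) * (2*real n - 2*real j + 2*l + 1))
      * x powr (2*real n - 2*real j + l - 1) * t powr (2*real j + l + 1)" for j
  define B where "B j = F * g (2*j) * g (2*n - 2*j)
      * (2*real j * (2*real j + 2*l + 1))
      * x powr (2*real n - 2*real j + l + 1) * t powr (2*real j + l - 1)" for j
  have term_split: "real ((2*n) choose (2*j)) * (Y_coeff l (2*j) * Y_coeff l (2*n - 2*j))
      * ((a (2*j) * (a (2*j) - 1) - l * (l + 1)) * x powr (a (2*j) - 2) * t powr b (2*j)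
         - (b (2*j) * (b (2*j) - 1) - l * (l + 1)) * x powr a (2*j) * t powr (b (2*j) - 2))
      = A j - B j" if "j \<le> n" for j
  proof -
    have "real ((2*n) choose (2*j)) * (Y_coeff l (2*j) * Y_coeff l (2*n - 2*j)) = F * g (2*j) * g (2*n - 2*j)"
      using binomial_fact[of "2*j" "2*n", where 'a=real] that by (simp add: F_def g_def)
    thus ?thesis unfolding A_def B_def a_def b_def using that
      by (simp add: algebra_simps)
  qed
  have step: "A j = B (Suc j)" if "j < n" for j
  proof -
    obtain r where n: "n = j + r + 1" using \<open>j < n\<close> by (metis add.commute less_iff_Suc_add plus_1_eq_Suc)
    have gA: "g (2*r + 2) * ((2*real r + 2) * (2*real r + 2*l + 3)) = g (2*r)"
      using Y_coeff_fact_step[of l "2*r"] by (simp add: g_def)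
    have gB: "g (2*j + 2) * ((2*real j + 2) * (2*real j + 2*l + 3)) = g (2*j)"
      using Y_coeff_fact_step[of l "2*j"] by (simp add: g_def)
    have "A j = F * g (2*j) * x powr (2*real r + l + 1) * t powr (2*real j + l + 1)
        * (g (2*r + 2) * ((2*real r + 2) * (2*real r + 2*l + 3)))"
      unfolding A_def n by (simp add: algebra_simps)
    also have "\<dots> = F * g (2*r) * x powr (2*real r + l + 1) * t powr (2*real j + l + 1)
        * (g (2*j + 2) * ((2*real j + 2) * (2*real j + 2*l + 3)))"
      unfolding gA gB by (simp add: mult_ac)
    also have "\<dots> = B (Suc j)"
      unfolding B_def n by (simp add: algebra_simps)
    finally show ?thesis .
  qed
  have "A n = 0" "B 0 = 0" unfolding A_def B_def by simp_all
  with step have "(\<Sum>j\<le>n. A j - B j) = 0" by (rule sum_atMost_telescope_diff)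
  thus ?thesis
    unfolding even_atMost_eq_image_double by (simp add: sum.reindex inj_on_def term_split)
qed

lemma YY_wave_poly_solves_pde:
  assumes l: "l > -1" and x: "x > 0" and t: "t > 0"
  shows "solves_pde l (YY l (wave_poly n)) x t"
  by (rule solves_pde_powr_sum[OF x t _ YY_wave_poly[OF l] wave_poly_terms_annihilated])
     (simp_all add: even_atMost_eq_image_double)

lemma YY_wave_poly_tendsto_left:
  assumes l: "l > -1" and t: "t > 0"
  shows "((\<lambda>x. YY l (wave_poly n) x t) \<longlongrightarrow> 0) (at_right 0)"
  by (rule tendsto_powr_sum_at_right_0[where p="\<lambda>k. real (2*n) - real k + l + 1"
        and c="\<lambda>k. real ((2*n) choose k) * (Y_coeff l k * Y_coeff l (2*n-k)) * t powr (real k + l + 1)"])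
     (use l t in \<open>auto simp: even_atMost_eq_image_double YY_wave_poly mult_ac\<close>)

lemma YY_wave_poly_tendsto_right:
  assumes l: "l > -1" and x: "x > 0"
  shows "((\<lambda>t. YY l (wave_poly n) x t) \<longlongrightarrow> 0) (at_right 0)"
  by (rule tendsto_powr_sum_at_right_0[where p="\<lambda>k. real k + l + 1"
        and c="\<lambda>k. real ((2*n) choose k) * (Y_coeff l k * Y_coeff l (2*n-k)) * x powr (real (2*n) - real k + l + 1)"])
     (use l x in \<open>auto simp: even_atMost_eq_image_double YY_wave_poly mult_ac\<close>)

lemma wave_poly_0: "wave_poly 0 = (\<lambda>x t. 1)"
proof -
  have "{k::nat. k \<le> 2*0 \<and> even k} = {0}" by auto
  thus ?thesis unfolding wave_poly_def by (simp add: fun_eq_iff)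
qed

lemma YY_wave_poly_0:
  assumes l: "l > -1" and x: "x > 0" and t: "t > 0"
  shows "YY l (wave_poly 0) x t = (C0 l)\<^sup>2 * x powr (l + 1) * t powr (l + 1)"
proof -
  have "{k::nat. k \<le> 2*0 \<and> even k} = {0}" by auto
  thus ?thesis unfolding YY_wave_poly[OF l x t] C0_eq_Y_coeff by (simp add: power2_eq_square)
qed

lemma YY_wave_poly_Gamma:
  assumes l: "l > -1" and x: "x > 0" and t: "t > 0"
  shows "YY l (wave_poly n) x t = (\<Sum>k\<in>{k. k \<le> 2*n \<and> even k}.
           real ((2*n) choose k)
           * (Gamma (real n + (1 - real k)/2) * Gamma ((real k + 1)/2) * (Gamma (l + 1))\<^sup>2
              / (2 powr (2*l + 3) * (Gamma (l + 3/2))\<^sup>2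
                 * Gamma (real n + l + (3 - real k)/2) * Gamma (l + (real k + 3)/2)))
           * x powr (real (2*n) - real k + l + 1) * t powr (real k + l + 1))"
  unfolding YY_wave_poly[OF l x t] by (intro sum.cong) (simp_all add: Y_coeff_mult_complement)

theorem proposition4p1:
  fixes l :: real
  assumes "l \<ge> -1/2"
  defines "U0 \<equiv> YY l (\<lambda>x t. 1)"
  defines "U \<equiv> (\<lambda>n::nat. YY l (wave_poly n))"
  shows
    "(\<forall>x>0. \<forall>t>0. solves_pde l U0 x t)
   \<and> (\<forall>t>0. U0 0 t = 0 \<and> ((\<lambda>x. U0 x t) \<longlongrightarrow> 0) (at_right 0))
   \<and> (\<forall>x>0. U0 x 0 = 0 \<and> ((\<lambda>t. U0 x t) \<longlongrightarrow> 0) (at_right 0))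
   \<and> (\<forall>x>0. \<forall>t>0. U0 x t = (C0 l)\<^sup>2 * x powr (l + 1) * t powr (l + 1))
   \<and> (\<forall>n\<ge>1. \<forall>x>0. \<forall>t>0. solves_pde l (U n) x t)
   \<and> (\<forall>n\<ge>1. \<forall>t>0. U n 0 t = 0 \<and> ((\<lambda>x. U n x t) \<longlongrightarrow> 0) (at_right 0))
   \<and> (\<forall>n\<ge>1. \<forall>x>0. U n x 0 = 0 \<and> ((\<lambda>t. U n x t) \<longlongrightarrow> 0) (at_right 0))
   \<and> (\<forall>n\<ge>1. \<forall>x>0. \<forall>t>0. U n x t =
        (\<Sum>k\<in>{k. k \<le> 2*n \<and> even k}.
           real ((2*n) choose k)
           * (Gamma (real n + (1 - real k)/2) * Gamma ((real k + 1)/2) * (Gamma (l + 1))\<^sup>2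
              / (2 powr (2*l + 3) * (Gamma (l + 3/2))\<^sup>2
                 * Gamma (real n + l + (3 - real k)/2) * Gamma (l + (real k + 3)/2)))
           * x powr (real (2*n) - real k + l + 1) * t powr (real k + l + 1)))"
proof -
  have l: "l > -1" using assms(1) by simp
  show ?thesis
    unfolding U0_def U_def wave_poly_0[symmetric]
    by (intro conjI allI impI;
        rule YY_wave_poly_solves_pde YY_wave_poly_0 YY_wave_poly_Gamma YY_at_0_left YY_at_0_right
          YY_wave_poly_tendsto_left YY_wave_poly_tendsto_right; (assumption | rule l))
qed

end
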